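(* Let $A,B,D,H$ be pairwise disjoint graphs, where $A$ is a path with an end-vertex $a$, $B$ is a path with an end-vertex $b$, $d\in V(D)$ is incident to at least one edge of $D$, and $x,y\in V(H)$ with $x\ne y$. Suppose $H$ has an automorphism $\eta$ with $\eta(x)=y$ and $\eta(y)=x$, and $v(A)\le v(B)$. Let $R$ be obtained from $A\cup B\cup H$ by identifying $x$ with $a$ and $y$ with $b$, and let $G_a$ (resp. $G_b$) be obtained from $R\cup D$ by identifying $d$ with $a$ (resp. with $b$). Then $c_s(G_a)\ge c_s(G_b)$ for every integer $s\ge 0$.
   Context: All graphs are finite, undirected, without loops; $v(\cdot)$ is the number of vertices. For a graph $G$ on $n$ vertices, with Laplacian matrix $L(G)=D(G)-A(G)$, write $\det(\lambda I-L(G))=\lambda\sum_{s=0}^{n-1}(-1)^s c_s(G)\lambda^{n-1-s}$; equivalently $c_s(G)=\sum_F\gamma(F)$ over spanning forests $F$ of $G$ with $s$ edges, where $\gamma(F)$ is the product of the numbers of vertices of the components of $F$; $c_s(G)=0$ for $s\ge n$. *)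

theory Defs
  imports Main
begin

type_synonym 'a graph = "'a set \<times> 'a set set"

definition verts :: "'a graph \<Rightarrow> 'a set" where "verts G = fst G"
definition edges :: "'a graph \<Rightarrow> 'a set set" where "edges G = snd G"

definition wf_graph :: "'a graph \<Rightarrow> bool" where
  "wf_graph G \<longleftrightarrow> finite (verts G) \<and>
     (\<forall>e\<in>edges G. \<exists>u v. u \<noteq> v \<and> e = {u, v} \<and> u \<in> verts G \<and> v \<in> verts G)"

definition is_path_with_end :: "'a graph \<Rightarrow> 'a \<Rightarrow> bool" where
  "is_path_with_end G a \<longleftrightarrow> (\<exists>vs. vs \<noteq> [] \<and> distinct vs \<and> hd vs = a \<and>
     verts G = set vs \<and> edges G = {{vs ! i, vs ! Suc i} | i. Suc i < length vs})"

definition graph_union :: "'a graph \<Rightarrow> 'a graph \<Rightarrow> 'a graph" where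
  "graph_union G H = (verts G \<union> verts H, edges G \<union> edges H)"

definition identify :: "'a graph \<Rightarrow> 'a \<Rightarrow> 'a \<Rightarrow> 'a graph" where
  "identify G u w = (let f = (\<lambda>z. if z = w then u else z) in
     (f ` verts G, (\<lambda>e. f ` e) ` edges G))"

definition is_automorphism :: "'a graph \<Rightarrow> ('a \<Rightarrow> 'a) \<Rightarrow> bool" where
  "is_automorphism G \<eta> \<longleftrightarrow> bij_betw \<eta> (verts G) (verts G) \<and>
     (\<forall>u\<in>verts G. \<forall>v\<in>verts G. {u, v} \<in> edges G \<longleftrightarrow> {\<eta> u, \<eta> v} \<in> edges G)"

definition conn :: "'a set set \<Rightarrow> ('a \<times> 'a) set" where
  "conn F = {(u, v). {u, v} \<in> F}\<^sup>*"

definition acyclic_edges :: "'a set set \<Rightarrow> bool" where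
  "acyclic_edges F \<longleftrightarrow> (\<forall>e\<in>F. \<forall>u v. e = {u, v} \<longrightarrow> (u, v) \<notin> conn (F - {e}))"

definition spanning_forests :: "'a graph \<Rightarrow> nat \<Rightarrow> 'a set set set" where
  "spanning_forests G s = {F. F \<subseteq> edges G \<and> card F = s \<and> acyclic_edges F}"

definition gamma :: "'a graph \<Rightarrow> 'a set set \<Rightarrow> nat" where
  "gamma G F = (\<Prod>C \<in> verts G // conn F. card C)"

definition lap_coeff :: "'a graph \<Rightarrow> nat \<Rightarrow> nat" where
  "lap_coeff G s = (\<Sum>F \<in> spanning_forests G s. gamma G F)"

end

theory Submission
  imports Defs "HOL-Computational_Algebra.Polynomial"
begin

text \<open>The numbers c_s(G) are the coefficients of the forest polynomial \<Sum>_s c_s(G) t^s. Refine it by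
  a set X of roots: a component of a spanning forest contributes its size if it contains no root,
  1 if it contains one and 0 otherwise. Gluing two graphs at a cut vertex v expresses the refined
  polynomial of the union through those of the two pieces with v free or rooted. Attaching D at a
  vertex c of R this gives P_R P_D(d) + P_R(c) (P_D - P_D(d)), so the difference between G_a and G_b
  is (P_R(a) - P_R(b)) (P_D - P_D(d)), and the second factor has nonnegative coefficients. Inside R
  the automorphism cancels the contributions of H, leaving P_H(x,y) times a 2x2 determinant of path
  polynomials, which has nonnegative coefficients because A is not longer than B.\<close>

section \<open>Connectivity\<close>

lemma conn_refl [simp]: "(u, u) \<in> conn F"
  unfolding conn_def by simp

lemma conn_edge: "{u, w} \<in> F \<Longrightarrow> (u, w) \<in> conn F"
  unfolding conn_def by (rule r_into_rtrancl) simp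

lemma conn_trans: "(u, w) \<in> conn F \<Longrightarrow> (w, z) \<in> conn F \<Longrightarrow> (u, z) \<in> conn F"
  unfolding conn_def by (rule rtrancl_trans)

lemma conn_sym: "(u, w) \<in> conn F \<Longrightarrow> (w, u) \<in> conn F"
proof -
  assume "(u, w) \<in> conn F"
  then have "(w, u) \<in> ({(u, v). {u, v} \<in> F}\<inverse>)\<^sup>*"
    unfolding conn_def by (simp add: rtrancl_converse)
  moreover have "{(u, v). {u, v} \<in> F}\<inverse> = {(u, v). {u, v} \<in> F}" by (auto simp: insert_commute)
  ultimately show ?thesis unfolding conn_def by simp
qed

lemma conn_mono: "F \<subseteq> F' \<Longrightarrow> conn F \<subseteq> conn F'"
  unfolding conn_def by (rule rtrancl_mono) blast

lemma conn_empty [simp]: "conn {} = Id"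
  unfolding conn_def by simp

lemma conn_class_eq:
  assumes "(u, w) \<in> conn F" shows "conn F `` {u} = conn F `` {w}"
  using conn_trans[OF assms] conn_trans[OF conn_sym[OF assms]] by blast

lemma conn_class_eq_iff: "conn F `` {u} = conn F `` {w} \<longleftrightarrow> (u, w) \<in> conn F"
proof
  assume "conn F `` {u} = conn F `` {w}"
  then show "(u, w) \<in> conn F" using conn_refl[of w F] by blast
qed (rule conn_class_eq)

lemma conn_class_subset_closed:
  assumes "u \<in> S" and closed: "\<And>y z. {y, z} \<in> F \<Longrightarrow> y \<in> S \<Longrightarrow> z \<in> S"
  shows "conn F `` {u} \<subseteq> S"
proof
  fix z assume "z \<in> conn F `` {u}"
  then have "(u, z) \<in> {(u, v). {u, v} \<in> F}\<^sup>*" unfolding conn_def by simp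
  then show "z \<in> S"
    by (induction rule: rtrancl_induct) (use assms in auto)
qed

lemma conn_class_subset: "(\<And>e. e \<in> F \<Longrightarrow> e \<subseteq> V) \<Longrightarrow> u \<in> V \<Longrightarrow> conn F `` {u} \<subseteq> V"
  by (rule conn_class_subset_closed) auto

lemma quotient_eq_image: "A // r = (\<lambda>x. r `` {x}) ` A"
  unfolding quotient_def by auto

lemma finite_quotient_of_finite: "finite A \<Longrightarrow> finite (A // r)"
  by (simp add: quotient_eq_image)

lemma acyclic_edges_subset:
  assumes "acyclic_edges F" "F' \<subseteq> F" shows "acyclic_edges F'"
  unfolding acyclic_edges_def
proof (intro ballI allI impI)
  fix e u w assume "e \<in> F'" "e = {u, w}"
  then have "(u, w) \<notin> conn (F - {e})" using assms unfolding acyclic_edges_def by blast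
  moreover have "conn (F' - {e}) \<subseteq> conn (F - {e})" using assms(2) by (intro conn_mono) blast
  ultimately show "(u, w) \<notin> conn (F' - {e})" by blast
qed


section \<open>Rooted forest weights\<close>

text \<open>With the vertices of X declared roots, a component C of a spanning forest can be rooted in
  card C ways if it contains no root, in one way if it contains exactly one, and in none if it
  contains several. For X = {} the product of these weights is gamma.\<close>

definition root_weight :: "'a set \<Rightarrow> 'a set \<Rightarrow> int" where
  "root_weight X C = (if X \<inter> C = {} then int (card C) else if card (X \<inter> C) = 1 then 1 else 0)"

definition forest_weight :: "'a set \<Rightarrow> 'a set set \<Rightarrow> 'a set \<Rightarrow> int" where
  "forest_weight V F X = (\<Prod>C\<in>V // conn F. root_weight X C)"

lemma root_weight_cong: "X \<inter> C = Y \<inter> C \<Longrightarrow> root_weight X C = root_weight Y C"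
  unfolding root_weight_def by simp

lemma root_weight_nonneg: "root_weight X C \<ge> 0"
  unfolding root_weight_def by simp

lemma root_weight_singleton [simp]: "root_weight X {u} = 1"
  unfolding root_weight_def by (cases "u \<in> X") auto

lemma root_weight_insert:
  assumes "v \<in> C" "v \<notin> X" "finite C"
  shows "root_weight (insert v X) C = (if X \<inter> C = {} then 1 else 0)"
proof -
  have "insert v X \<inter> C = insert v (X \<inter> C)" "v \<notin> X \<inter> C" using assms by auto
  then show ?thesis
    unfolding root_weight_def using assms(3) by (simp add: card_insert_if)
qed

lemma root_weight_Un_root:
  assumes fin: "finite C1" "finite C2" and cut: "C1 \<inter> C2 = {v}" and v: "v \<in> X"
  shows "root_weight X (C1 \<union> C2) = root_weight X C1 * root_weight X C2"
proof -
  have fin': "finite (X \<inter> C1)" "finite (X \<inter> C2)" using fin by auto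
  have "(X \<inter> C1) \<inter> (X \<inter> C2) = {v}" using cut v by auto
  then have card: "card (X \<inter> (C1 \<union> C2)) + 1 = card (X \<inter> C1) + card (X \<inter> C2)"
    using card_Un_Int[OF fin'] by (simp add: Int_Un_distrib)
  have ne: "X \<inter> C1 \<noteq> {}" "X \<inter> C2 \<noteq> {}" "X \<inter> (C1 \<union> C2) \<noteq> {}" using cut v by auto
  then have "card (X \<inter> C1) \<ge> 1" "card (X \<inter> C2) \<ge> 1" using fin'
    by (simp_all add: Suc_leI card_gt_0_iff)
  then have "card (X \<inter> (C1 \<union> C2)) = 1 \<longleftrightarrow> card (X \<inter> C1) = 1 \<and> card (X \<inter> C2) = 1"
    using card by linarith
  then show ?thesis unfolding root_weight_def using ne by simp
qed

lemma root_weight_Un_nonroot: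
  assumes fin: "finite C1" "finite C2" and cut: "C1 \<inter> C2 = {v}" and v: "v \<notin> X"
  shows "root_weight X (C1 \<union> C2) =
    root_weight X C1 * root_weight (insert v X) C2 + root_weight (insert v X) C1 * root_weight X C2
    - root_weight (insert v X) C1 * root_weight (insert v X) C2"
proof -
  have "v \<in> C1" "v \<in> C2" using cut by auto
  note w1 = root_weight_insert[OF \<open>v \<in> C1\<close> v fin(1)] and w2 = root_weight_insert[OF \<open>v \<in> C2\<close> v fin(2)]
  have Un: "X \<inter> (C1 \<union> C2) = (X \<inter> C1) \<union> (X \<inter> C2)" by auto
  have card_X: "card (X \<inter> (C1 \<union> C2)) = card (X \<inter> C1) + card (X \<inter> C2)"
    unfolding Un using cut v fin by (intro card_Un_disjoint) auto
  have card_C: "int (card (C1 \<union> C2)) = int (card C1) + int (card C2) - 1"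
    using card_Un_Int[OF fin] cut by simp
  consider "X \<inter> C1 = {}" "X \<inter> C2 = {}" | "X \<inter> C1 = {}" "X \<inter> C2 \<noteq> {}"
    | "X \<inter> C1 \<noteq> {}" "X \<inter> C2 = {}" | "X \<inter> C1 \<noteq> {}" "X \<inter> C2 \<noteq> {}" by blast
  then show ?thesis
  proof cases
    case 1
    then show ?thesis using w1 w2 card_C unfolding root_weight_def by (simp add: Un)
  next
    case 2
    then have "root_weight X (C1 \<union> C2) = root_weight X C2" unfolding root_weight_def Un by simp
    then show ?thesis using 2 w1 w2 by simp
  next
    case 3
    then have "root_weight X (C1 \<union> C2) = root_weight X C1" unfolding root_weight_def Un by simp
    then show ?thesis using 3 w1 w2 by simp
  next
    case 4
    then have "card (X \<inter> C1) \<noteq> 0" "card (X \<inter> C2) \<noteq> 0" using fin by auto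
    moreover have "X \<inter> (C1 \<union> C2) \<noteq> {}" using 4 by blast
    ultimately have "root_weight X (C1 \<union> C2) = 0" unfolding root_weight_def card_X by auto
    then show ?thesis using 4 w1 w2 by simp
  qed
qed

text \<open>The cut vertex v is shared, so |C1 \<union> C2| = |C1| + |C2| - 1; inclusion-exclusion over where
  the merged component is rooted gives the three terms. For v \<in> X they collapse to a product.\<close>

lemma root_weight_Un:
  assumes "finite C1" "finite C2" "C1 \<inter> C2 = {v}"
  shows "root_weight X (C1 \<union> C2) =
    root_weight X C1 * root_weight (insert v X) C2 + root_weight (insert v X) C1 * root_weight X C2
    - root_weight (insert v X) C1 * root_weight (insert v X) C2"
proof (cases "v \<in> X")
  case True
  then show ?thesis using root_weight_Un_root[OF assms True] by (simp add: insert_absorb)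
qed (rule root_weight_Un_nonroot[OF assms])


section \<open>Gluing edge sets at a cut vertex\<close>

locale cut_vertex =
  fixes V1 V2 :: "'a set" and F1 F2 :: "'a set set" and v :: 'a
  assumes F1_subset: "e \<in> F1 \<Longrightarrow> e \<subseteq> V1" and F2_subset: "e \<in> F2 \<Longrightarrow> e \<subseteq> V2"
    and cut: "V1 \<inter> V2 = {v}"
begin

abbreviation "C1 \<equiv> conn F1 `` {v}"
abbreviation "C2 \<equiv> conn F2 `` {v}"

lemma swap: "cut_vertex V2 V1 F2 F1 v"
  by unfold_locales (use F1_subset F2_subset cut in auto)

lemma v_in: "v \<in> V1" "v \<in> V2"
  using cut by auto

lemma C1_subset: "C1 \<subseteq> V1" and C2_subset: "C2 \<subseteq> V2"
  using conn_class_subset[of F1 V1 v] conn_class_subset[of F2 V2 v] F1_subset F2_subset v_in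
  by auto

lemma C1_Int_C2: "C1 \<inter> C2 = {v}"
  using C1_subset C2_subset cut by auto

lemma C1_Un_C2_closed:
  assumes e: "{y, z} \<in> F1" and y: "y \<in> C1 \<union> C2"
  shows "z \<in> C1 \<union> C2"
proof -
  have "y \<in> C1"
  proof (cases "y = v")
    case False
    then have "y \<notin> V2" using F1_subset[OF e] cut by blast
    then show ?thesis using y C2_subset by blast
  qed simp
  then have "(v, z) \<in> conn F1" using conn_trans[OF _ conn_edge[OF e]] by simp
  then show ?thesis by simp
qed

lemma class_connected:
  assumes uv: "(u, v) \<in> conn F1"
  shows "conn (F1 \<union> F2) `` {u} = C1 \<union> C2"
proof
  show "conn (F1 \<union> F2) `` {u} \<subseteq> C1 \<union> C2"
  proof (rule conn_class_subset_closed)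
    show "u \<in> C1 \<union> C2" using conn_sym[OF uv] by simp
    fix y z assume "{y, z} \<in> F1 \<union> F2" "y \<in> C1 \<union> C2"
    then show "z \<in> C1 \<union> C2"
      using C1_Un_C2_closed cut_vertex.C1_Un_C2_closed[OF swap] by (auto simp: Un_commute)
  qed
  have "conn F1 \<subseteq> conn (F1 \<union> F2)" "conn F2 \<subseteq> conn (F1 \<union> F2)"
    by (simp_all add: conn_mono)
  then have "(u, v) \<in> conn (F1 \<union> F2)" "C1 \<union> C2 \<subseteq> conn (F1 \<union> F2) `` {v}"
    using uv by blast+
  then show "C1 \<union> C2 \<subseteq> conn (F1 \<union> F2) `` {u}" using conn_class_eq[of u v "F1 \<union> F2"] by simp
qed

lemma class_unconnected:
  assumes u: "u \<in> V1" and uv: "(u, v) \<notin> conn F1"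
  shows "conn (F1 \<union> F2) `` {u} = conn F1 `` {u}"
proof
  show "conn (F1 \<union> F2) `` {u} \<subseteq> conn F1 `` {u}"
  proof (rule conn_class_subset_closed)
    fix y z assume e: "{y, z} \<in> F1 \<union> F2" and y: "y \<in> conn F1 `` {u}"
    have "conn F1 `` {u} \<subseteq> V1" using conn_class_subset[of F1 V1 u] F1_subset u by simp
    then have "y \<in> V1" using y by blast
    moreover have "y \<noteq> v" using y uv by auto
    ultimately have "{y, z} \<notin> F2" using F2_subset[of "{y, z}"] cut by blast
    then show "z \<in> conn F1 `` {u}" using e y conn_trans[OF _ conn_edge] by simp
  qed simp
  show "conn F1 `` {u} \<subseteq> conn (F1 \<union> F2) `` {u}"
    using conn_mono[of F1 "F1 \<union> F2"] by blast
qed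

lemma class_left:
  "u \<in> V1 \<Longrightarrow> conn (F1 \<union> F2) `` {u} = (if (u, v) \<in> conn F1 then C1 \<union> C2 else conn F1 `` {u})"
  by (simp add: class_connected class_unconnected)

lemma class_left_image:
  "(\<lambda>u. conn (F1 \<union> F2) `` {u}) ` V1 = (V1 // conn F1 - {C1}) \<union> {C1 \<union> C2}"
proof (intro equalityI subsetI)
  fix C assume "C \<in> (\<lambda>u. conn (F1 \<union> F2) `` {u}) ` V1"
  then obtain u where u: "u \<in> V1" "C = conn (F1 \<union> F2) `` {u}" by blast
  then show "C \<in> (V1 // conn F1 - {C1}) \<union> {C1 \<union> C2}"
    using class_left[OF u(1)] conn_class_eq_iff[of F1 u v] by (auto simp: quotient_eq_image)
next
  fix C assume C: "C \<in> (V1 // conn F1 - {C1}) \<union> {C1 \<union> C2}"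
  show "C \<in> (\<lambda>u. conn (F1 \<union> F2) `` {u}) ` V1"
  proof (cases "C = C1 \<union> C2")
    case True
    then show ?thesis using class_left[OF v_in(1)] v_in(1) by auto
  next
    case False
    then obtain u where u: "u \<in> V1" "C = conn F1 `` {u}" "C \<noteq> C1"
      using C by (auto simp: quotient_eq_image)
    then have "conn (F1 \<union> F2) `` {u} = C"
      using class_left[OF u(1)] conn_class_eq_iff[of F1 u v] by simp
    then show ?thesis using u(1) by blast
  qed
qed

lemma quotient_glue:
  "(V1 \<union> V2) // conn (F1 \<union> F2) = (V1 // conn F1 - {C1}) \<union> (V2 // conn F2 - {C2}) \<union> {C1 \<union> C2}"
proof -
  have "(V1 \<union> V2) // conn (F1 \<union> F2) =
      (\<lambda>u. conn (F1 \<union> F2) `` {u}) ` V1 \<union> (\<lambda>u. conn (F2 \<union> F1) `` {u}) ` V2"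
    by (simp add: quotient_eq_image image_Un Un_commute)
  also have "\<dots> = (V1 // conn F1 - {C1}) \<union> {C1 \<union> C2} \<union> ((V2 // conn F2 - {C2}) \<union> {C2 \<union> C1})"
    by (simp only: class_left_image cut_vertex.class_left_image[OF swap])
  finally show ?thesis by (simp add: Un_ac)
qed

lemma other_class_left:
  assumes "C \<in> V1 // conn F1 - {C1}"
  shows "C \<noteq> {}" "C \<subseteq> V1 - {v}"
proof -
  obtain u where u: "u \<in> V1" "C = conn F1 `` {u}" "C \<noteq> C1"
    using assms by (auto simp: quotient_eq_image)
  then have "u \<in> C" by simp
  then show "C \<noteq> {}" by blast
  have "C \<subseteq> V1" using conn_class_subset[of F1 V1 u] F1_subset u by simp
  moreover have "v \<notin> C" using u conn_class_eq_iff[of F1 u v] by simp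
  ultimately show "C \<subseteq> V1 - {v}" by blast
qed

lemma other_classes_disjoint: "(V1 // conn F1 - {C1}) \<inter> (V2 // conn F2 - {C2}) = {}"
  using other_class_left cut_vertex.other_class_left[OF swap] cut by blast

lemma not_conn_glue_left:
  assumes u: "u \<in> V1" and w: "w \<in> V1" and uw: "(u, w) \<notin> conn F1"
  shows "(u, w) \<notin> conn (F1 \<union> F2)"
proof
  assume "(u, w) \<in> conn (F1 \<union> F2)"
  then have w_class: "w \<in> conn (F1 \<union> F2) `` {u}" by simp
  show False
  proof (cases "(u, v) \<in> conn F1")
    case True
    have "w \<notin> C1"
    proof
      assume "w \<in> C1"
      then show False using conn_trans[OF True] uw by simp
    qed
    moreover have "w \<notin> C2"
    proof
      assume "w \<in> C2"
      then have "w = v" using C2_subset cut w by blast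
      then show False using True uw by simp
    qed
    ultimately show False using w_class class_left[OF u] True by simp
  next
    case False
    then show False using w_class class_left[OF u] uw by simp
  qed
qed

lemma acyclic_edges_Un:
  assumes disjoint: "F1 \<inter> F2 = {}"
  shows "acyclic_edges (F1 \<union> F2) \<longleftrightarrow> acyclic_edges F1 \<and> acyclic_edges F2"
proof (intro iffI conjI)
  assume ac: "acyclic_edges F1 \<and> acyclic_edges F2"
  show "acyclic_edges (F1 \<union> F2)"
    unfolding acyclic_edges_def
  proof (intro ballI allI impI)
    fix e u w assume e: "e \<in> F1 \<union> F2" "e = {u, w}"
    show "(u, w) \<notin> conn (F1 \<union> F2 - {e})"
    proof (cases "e \<in> F1")
      case True
      interpret L: cut_vertex V1 V2 "F1 - {e}" F2 v
        by unfold_locales (use F1_subset F2_subset cut in auto)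
      have "(u, w) \<notin> conn (F1 - {e})" using ac True e(2) unfolding acyclic_edges_def by blast
      moreover have "u \<in> V1" "w \<in> V1" using F1_subset[OF True] e(2) by auto
      moreover have "F1 \<union> F2 - {e} = (F1 - {e}) \<union> F2" using True disjoint by auto
      ultimately show ?thesis using L.not_conn_glue_left by simp
    next
      case False
      then have e2: "e \<in> F2" using e(1) by blast
      interpret R: cut_vertex V2 V1 "F2 - {e}" F1 v
        by unfold_locales (use F1_subset F2_subset cut in auto)
      have "(u, w) \<notin> conn (F2 - {e})" using ac e2 e(2) unfolding acyclic_edges_def by blast
      moreover have "u \<in> V2" "w \<in> V2" using F2_subset[OF e2] e(2) by auto
      moreover have "F1 \<union> F2 - {e} = (F2 - {e}) \<union> F1" using False by auto
      ultimately show ?thesis using R.not_conn_glue_left by simp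
    qed
  qed
qed (auto elim: acyclic_edges_subset)

lemma forest_weight_left:
  assumes fin: "finite V1" and XY: "Y \<inter> (V1 - {v}) = X \<inter> (V1 - {v})"
  shows "forest_weight V1 F1 Y = root_weight Y C1 * (\<Prod>C\<in>V1 // conn F1 - {C1}. root_weight X C)"
proof -
  have "C1 \<in> V1 // conn F1" using v_in(1) by (rule quotientI)
  then have "forest_weight V1 F1 Y = root_weight Y C1 * (\<Prod>C\<in>V1 // conn F1 - {C1}. root_weight Y C)"
    unfolding forest_weight_def using fin by (simp add: finite_quotient_of_finite prod.remove)
  also have "(\<Prod>C\<in>V1 // conn F1 - {C1}. root_weight Y C) = (\<Prod>C\<in>V1 // conn F1 - {C1}. root_weight X C)"
  proof (rule prod.cong)
    fix C assume "C \<in> V1 // conn F1 - {C1}"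
    then have "C \<subseteq> V1 - {v}" by (rule other_class_left)
    then show "root_weight Y C = root_weight X C" using XY by (intro root_weight_cong) blast
  qed simp
  finally show ?thesis .
qed

lemma forest_weight_glue_factor:
  assumes "finite V1" "finite V2"
  shows "forest_weight (V1 \<union> V2) (F1 \<union> F2) X =
    (\<Prod>C\<in>V1 // conn F1 - {C1}. root_weight X C) * (\<Prod>C\<in>V2 // conn F2 - {C2}. root_weight X C)
    * root_weight X (C1 \<union> C2)"
proof -
  have fin: "finite (V1 // conn F1 - {C1})" "finite (V2 // conn F2 - {C2})"
    using assms by (simp_all add: finite_quotient_of_finite)
  have v: "v \<in> C1 \<union> C2" by simp
  have "C1 \<union> C2 \<notin> V1 // conn F1 - {C1}"
    using other_class_left(2)[of "C1 \<union> C2"] v by blast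
  moreover have "C1 \<union> C2 \<notin> V2 // conn F2 - {C2}"
    using cut_vertex.other_class_left(2)[OF swap, of "C1 \<union> C2"] v by blast
  ultimately have "C1 \<union> C2 \<notin> (V1 // conn F1 - {C1}) \<union> (V2 // conn F2 - {C2})" by blast
  then show ?thesis
    unfolding forest_weight_def quotient_glue
    using fin other_classes_disjoint by (simp add: prod.union_disjoint)
qed

lemma forest_weight_glue:
  assumes fin: "finite V1" "finite V2"
  shows "forest_weight (V1 \<union> V2) (F1 \<union> F2) X =
    forest_weight V1 F1 (X \<inter> V1) * forest_weight V2 F2 (insert v (X \<inter> V2))
    + forest_weight V1 F1 (insert v (X \<inter> V1)) * forest_weight V2 F2 (X \<inter> V2)
    - forest_weight V1 F1 (insert v (X \<inter> V1)) * forest_weight V2 F2 (insert v (X \<inter> V2))"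
proof -
  define r1 where "r1 = (\<Prod>C\<in>V1 // conn F1 - {C1}. root_weight X C)"
  define r2 where "r2 = (\<Prod>C\<in>V2 // conn F2 - {C2}. root_weight X C)"
  have fin_C: "finite C1" "finite C2"
    using C1_subset C2_subset fin by (auto intro: finite_subset)
  have left: "forest_weight V1 F1 Y = root_weight Z C1 * r1"
    if "Y \<inter> (V1 - {v}) = X \<inter> (V1 - {v})" "Y \<inter> C1 = Z \<inter> C1" for Y Z
    using forest_weight_left[OF fin(1) that(1)] root_weight_cong[OF that(2)] unfolding r1_def by simp
  have right: "forest_weight V2 F2 Y = root_weight Z C2 * r2"
    if "Y \<inter> (V2 - {v}) = X \<inter> (V2 - {v})" "Y \<inter> C2 = Z \<inter> C2" for Y Z
    using cut_vertex.forest_weight_left[OF swap fin(2) that(1)] root_weight_cong[OF that(2)]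
    unfolding r2_def by simp
  have "forest_weight V1 F1 (X \<inter> V1) = root_weight X C1 * r1"
    by (rule left) (use C1_subset in blast)+
  moreover have "forest_weight V1 F1 (insert v (X \<inter> V1)) = root_weight (insert v X) C1 * r1"
    by (rule left) (use C1_subset in blast)+
  moreover have "forest_weight V2 F2 (X \<inter> V2) = root_weight X C2 * r2"
    by (rule right) (use C2_subset in blast)+
  moreover have "forest_weight V2 F2 (insert v (X \<inter> V2)) = root_weight (insert v X) C2 * r2"
    by (rule right) (use C2_subset in blast)+
  ultimately show ?thesis
    unfolding forest_weight_glue_factor[OF fin] root_weight_Un[OF fin_C C1_Int_C2] r1_def r2_def
    by (simp add: algebra_simps)
qed

end


section \<open>Rooted forest coefficients of graphs\<close>

lemma verts_pair [simp]: "verts (V, E) = V" and edges_pair [simp]: "edges (V, E) = E"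
  unfolding verts_def edges_def by simp_all

lemma verts_graph_union [simp]: "verts (graph_union G1 G2) = verts G1 \<union> verts G2"
  and edges_graph_union [simp]: "edges (graph_union G1 G2) = edges G1 \<union> edges G2"
  unfolding graph_union_def by simp_all

lemma wf_graph_finite: "wf_graph G \<Longrightarrow> finite (verts G)"
  unfolding wf_graph_def by simp

lemma wf_graph_edgeE:
  assumes "wf_graph G" "e \<in> edges G"
  obtains u w where "u \<noteq> w" "e = {u, w}" "u \<in> verts G" "w \<in> verts G"
  using assms unfolding wf_graph_def by blast

lemma wf_graph_edge_subset: "wf_graph G \<Longrightarrow> e \<in> edges G \<Longrightarrow> e \<subseteq> verts G"
  by (erule wf_graph_edgeE) auto

lemma wf_graph_finite_edges:
  assumes "wf_graph G" shows "finite (edges G)"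
proof (rule finite_subset)
  show "edges G \<subseteq> Pow (verts G)" using wf_graph_edge_subset[OF assms] by blast
  show "finite (Pow (verts G))" using wf_graph_finite[OF assms] by simp
qed

lemma wf_graph_union:
  assumes "wf_graph G1" "wf_graph G2" shows "wf_graph (graph_union G1 G2)"
proof -
  have "\<exists>u w. u \<noteq> w \<and> e = {u, w} \<and> u \<in> verts G \<and> w \<in> verts G"
    if "wf_graph G" "e \<in> edges G" for G and e :: "'a set"
    using that unfolding wf_graph_def by blast
  then show ?thesis
    using assms unfolding wf_graph_def by (simp add: Ball_def) blast
qed

lemma wf_graph_edges_disjoint:
  assumes "wf_graph G1" "wf_graph G2" "verts G1 \<inter> verts G2 = {v}"
  shows "edges G1 \<inter> edges G2 = {}"
proof (rule ccontr)
  assume "edges G1 \<inter> edges G2 \<noteq> {}"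
  then obtain e where e: "e \<in> edges G1" "e \<in> edges G2" by blast
  from assms(1) e(1) obtain u w where "u \<noteq> w" "e = {u, w}" "u \<in> verts G1" "w \<in> verts G1"
    by (rule wf_graph_edgeE)
  moreover have "e \<subseteq> {v}" using e assms wf_graph_edge_subset by blast
  ultimately show False by blast
qed

lemma cut_vertex_graphs:
  assumes "wf_graph G1" "wf_graph G2" "verts G1 \<inter> verts G2 = {v}"
    and "F1 \<subseteq> edges G1" "F2 \<subseteq> edges G2"
  shows "cut_vertex (verts G1) (verts G2) F1 F2 v"
  using assms by unfold_locales (auto dest: wf_graph_edge_subset)

lemma finite_spanning_forests:
  assumes "wf_graph G" shows "finite (spanning_forests G s)"
proof (rule finite_subset)
  show "spanning_forests G s \<subseteq> Pow (edges G)" by (auto simp: spanning_forests_def)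
  show "finite (Pow (edges G))" using wf_graph_finite_edges[OF assms] by simp
qed

lemma spanning_forests_graph_union:
  assumes G1: "wf_graph G1" and G2: "wf_graph G2" and cut: "verts G1 \<inter> verts G2 = {v}"
    and F: "F1 \<subseteq> edges G1" "F2 \<subseteq> edges G2"
  shows "F1 \<union> F2 \<in> spanning_forests (graph_union G1 G2) s \<longleftrightarrow>
    F1 \<in> spanning_forests G1 (card F1) \<and> F2 \<in> spanning_forests G2 (card F2) \<and> card F1 + card F2 = s"
proof -
  have disjoint: "F1 \<inter> F2 = {}" using wf_graph_edges_disjoint[OF G1 G2 cut] F by blast
  have "card (F1 \<union> F2) = card F1 + card F2"
    using F wf_graph_finite_edges[OF G1] wf_graph_finite_edges[OF G2] disjoint
    by (intro card_Un_disjoint) (auto intro: finite_subset)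
  then show ?thesis
    using cut_vertex.acyclic_edges_Un[OF cut_vertex_graphs[OF G1 G2 cut F] disjoint] F
    by (auto simp: spanning_forests_def)
qed

lemma spanning_forests_glue:
  assumes G1: "wf_graph G1" and G2: "wf_graph G2" and cut: "verts G1 \<inter> verts G2 = {v}"
  shows "bij_betw (\<lambda>(i, F1, F2). F1 \<union> F2)
    (SIGMA i:{..s}. spanning_forests G1 i \<times> spanning_forests G2 (s - i))
    (spanning_forests (graph_union G1 G2) s)"
proof (rule bij_betw_byWitness[where f' = "\<lambda>F. (card (F \<inter> edges G1), F \<inter> edges G1, F \<inter> edges G2)"])
  note union_iff = spanning_forests_graph_union[OF G1 G2 cut]
  have disjoint: "edges G1 \<inter> edges G2 = {}" using wf_graph_edges_disjoint[OF G1 G2 cut] .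
  have member: "i \<le> s" "F1 \<subseteq> edges G1" "F2 \<subseteq> edges G2" "card F1 = i" "card F2 = s - i"
    if "a = (i, F1, F2)" "a \<in> (SIGMA i:{..s}. spanning_forests G1 i \<times> spanning_forests G2 (s - i))"
    for a i F1 F2
    using that by (auto simp: spanning_forests_def)
  show "\<forall>a\<in>SIGMA i:{..s}. spanning_forests G1 i \<times> spanning_forests G2 (s - i).
      (\<lambda>F. (card (F \<inter> edges G1), F \<inter> edges G1, F \<inter> edges G2)) ((\<lambda>(i, F1, F2). F1 \<union> F2) a) = a"
  proof
    fix a assume a: "a \<in> (SIGMA i:{..s}. spanning_forests G1 i \<times> spanning_forests G2 (s - i))"
    obtain i F1 F2 where a_eq: "a = (i, F1, F2)" by (cases a)
    have "(F1 \<union> F2) \<inter> edges G1 = F1" "(F1 \<union> F2) \<inter> edges G2 = F2"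
      using member[OF a_eq a] disjoint by blast+
    then show "(\<lambda>F. (card (F \<inter> edges G1), F \<inter> edges G1, F \<inter> edges G2)) ((\<lambda>(i, F1, F2). F1 \<union> F2) a) = a"
      using member[OF a_eq a] a_eq by simp
  qed
  show "\<forall>F\<in>spanning_forests (graph_union G1 G2) s.
      (\<lambda>(i, F1, F2). F1 \<union> F2) (card (F \<inter> edges G1), F \<inter> edges G1, F \<inter> edges G2) = F"
    by (auto simp: spanning_forests_def)
  show "(\<lambda>(i, F1, F2). F1 \<union> F2) ` (SIGMA i:{..s}. spanning_forests G1 i \<times> spanning_forests G2 (s - i))
      \<subseteq> spanning_forests (graph_union G1 G2) s"
  proof (rule image_subsetI)
    fix a assume a: "a \<in> (SIGMA i:{..s}. spanning_forests G1 i \<times> spanning_forests G2 (s - i))"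
    obtain i F1 F2 where a_eq: "a = (i, F1, F2)" by (cases a)
    then show "(\<lambda>(i, F1, F2). F1 \<union> F2) a \<in> spanning_forests (graph_union G1 G2) s"
      using member[OF a_eq a] a union_iff by auto
  qed
  show "(\<lambda>F. (card (F \<inter> edges G1), F \<inter> edges G1, F \<inter> edges G2)) ` spanning_forests (graph_union G1 G2) s
      \<subseteq> (SIGMA i:{..s}. spanning_forests G1 i \<times> spanning_forests G2 (s - i))"
  proof (rule image_subsetI)
    fix F assume F: "F \<in> spanning_forests (graph_union G1 G2) s"
    then have "F = (F \<inter> edges G1) \<union> (F \<inter> edges G2)" by (auto simp: spanning_forests_def)
    then show "(card (F \<inter> edges G1), F \<inter> edges G1, F \<inter> edges G2)
        \<in> (SIGMA i:{..s}. spanning_forests G1 i \<times> spanning_forests G2 (s - i))"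
      using F union_iff[of "F \<inter> edges G1" "F \<inter> edges G2"] by auto
  qed
qed

definition rooted_coeff :: "'a graph \<Rightarrow> 'a set \<Rightarrow> nat \<Rightarrow> int" where
  "rooted_coeff G X s = (\<Sum>F\<in>spanning_forests G s. forest_weight (verts G) F X)"

lemma lap_coeff_eq_rooted_coeff: "int (lap_coeff G s) = rooted_coeff G {} s"
  unfolding lap_coeff_def gamma_def rooted_coeff_def forest_weight_def root_weight_def by simp

lemma rooted_coeff_nonneg: "rooted_coeff G X s \<ge> 0"
  unfolding rooted_coeff_def forest_weight_def
  by (intro sum_nonneg prod_nonneg) (simp add: root_weight_nonneg)

lemma rooted_coeff_eq_0:
  assumes "wf_graph G" "card (edges G) < s" shows "rooted_coeff G X s = 0"
proof -
  have "card F < s" if "F \<subseteq> edges G" for F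
    using card_mono[OF wf_graph_finite_edges[OF assms(1)] that] assms(2) by linarith
  then have "spanning_forests G s = {}" by (auto simp: spanning_forests_def)
  then show ?thesis unfolding rooted_coeff_def by simp
qed

lemma sum_product_Times: "(\<Sum>(x, y)\<in>A \<times> B. f x * g y) = sum f A * (sum g B :: 'b :: comm_semiring_0)"
  by (simp add: sum_product sum.cartesian_product)

lemma sum_forest_weight_glue:
  assumes G1: "wf_graph G1" and G2: "wf_graph G2" and cut: "verts G1 \<inter> verts G2 = {v}"
  shows "(\<Sum>(F1, F2)\<in>spanning_forests G1 i \<times> spanning_forests G2 j.
        forest_weight (verts G1 \<union> verts G2) (F1 \<union> F2) X) =
      rooted_coeff G1 (X \<inter> verts G1) i * rooted_coeff G2 (insert v (X \<inter> verts G2)) j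
      + rooted_coeff G1 (insert v (X \<inter> verts G1)) i * rooted_coeff G2 (X \<inter> verts G2) j
      - rooted_coeff G1 (insert v (X \<inter> verts G1)) i * rooted_coeff G2 (insert v (X \<inter> verts G2)) j"
proof -
  let ?A = "spanning_forests G1 i" and ?B = "spanning_forests G2 j"
  let ?w1 = "\<lambda>Y F. forest_weight (verts G1) F Y" and ?w2 = "\<lambda>Y F. forest_weight (verts G2) F Y"
  let ?X1 = "X \<inter> verts G1" and ?X2 = "X \<inter> verts G2"
  have "(\<Sum>(F1, F2)\<in>?A \<times> ?B. forest_weight (verts G1 \<union> verts G2) (F1 \<union> F2) X) =
      (\<Sum>(F1, F2)\<in>?A \<times> ?B. ?w1 ?X1 F1 * ?w2 (insert v ?X2) F2 + ?w1 (insert v ?X1) F1 * ?w2 ?X2 F2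
        - ?w1 (insert v ?X1) F1 * ?w2 (insert v ?X2) F2)"
  proof (rule sum.cong, simp, clarify)
    fix F1 F2 assume "F1 \<in> ?A" "F2 \<in> ?B"
    then have "F1 \<subseteq> edges G1" "F2 \<subseteq> edges G2" by (auto simp: spanning_forests_def)
    from cut_vertex.forest_weight_glue[OF cut_vertex_graphs[OF G1 G2 cut this]]
    show "forest_weight (verts G1 \<union> verts G2) (F1 \<union> F2) X =
        ?w1 ?X1 F1 * ?w2 (insert v ?X2) F2 + ?w1 (insert v ?X1) F1 * ?w2 ?X2 F2
        - ?w1 (insert v ?X1) F1 * ?w2 (insert v ?X2) F2"
      using G1 G2 by (simp add: wf_graph_finite)
  qed
  also have "\<dots> = (\<Sum>(F1, F2)\<in>?A \<times> ?B. ?w1 ?X1 F1 * ?w2 (insert v ?X2) F2)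
      + (\<Sum>(F1, F2)\<in>?A \<times> ?B. ?w1 (insert v ?X1) F1 * ?w2 ?X2 F2)
      - (\<Sum>(F1, F2)\<in>?A \<times> ?B. ?w1 (insert v ?X1) F1 * ?w2 (insert v ?X2) F2)"
    by (simp add: split_def sum_subtractf sum.distrib)
  finally show ?thesis
    unfolding rooted_coeff_def sum_product_Times .
qed

lemma rooted_coeff_glue:
  assumes G1: "wf_graph G1" and G2: "wf_graph G2" and cut: "verts G1 \<inter> verts G2 = {v}"
  shows "rooted_coeff (graph_union G1 G2) X s =
    (\<Sum>i\<le>s. rooted_coeff G1 (X \<inter> verts G1) i * rooted_coeff G2 (insert v (X \<inter> verts G2)) (s - i)
      + rooted_coeff G1 (insert v (X \<inter> verts G1)) i * rooted_coeff G2 (X \<inter> verts G2) (s - i)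
      - rooted_coeff G1 (insert v (X \<inter> verts G1)) i * rooted_coeff G2 (insert v (X \<inter> verts G2)) (s - i))"
proof -
  have "rooted_coeff (graph_union G1 G2) X s =
      (\<Sum>(i, F1, F2)\<in>(SIGMA i:{..s}. spanning_forests G1 i \<times> spanning_forests G2 (s - i)).
         forest_weight (verts G1 \<union> verts G2) (F1 \<union> F2) X)"
    unfolding rooted_coeff_def
    by (subst sum.reindex_bij_betw[OF spanning_forests_glue[OF G1 G2 cut], symmetric])
      (simp add: case_prod_unfold)
  also have "\<dots> = (\<Sum>i\<le>s. \<Sum>(F1, F2)\<in>spanning_forests G1 i \<times> spanning_forests G2 (s - i).
      forest_weight (verts G1 \<union> verts G2) (F1 \<union> F2) X)"
    by (subst sum.Sigma) (auto simp: G1 G2 finite_spanning_forests split_def)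
  finally show ?thesis by (simp only: sum_forest_weight_glue[OF G1 G2 cut])
qed

lemma root_weight_le_card:
  assumes "finite C" "C \<noteq> {}" shows "root_weight X C \<le> root_weight {} C"
proof -
  have "1 \<le> card C" using assms by (simp add: Suc_leI card_gt_0_iff)
  then show ?thesis unfolding root_weight_def by auto
qed

lemma rooted_coeff_le_unrooted:
  assumes G: "wf_graph G" shows "rooted_coeff G X s \<le> rooted_coeff G {} s"
  unfolding rooted_coeff_def forest_weight_def
proof (intro sum_mono prod_mono conjI root_weight_nonneg)
  fix F C assume "F \<in> spanning_forests G s" "C \<in> verts G // conn F"
  then obtain u where u: "u \<in> verts G" "C = conn F `` {u}" and F: "F \<subseteq> edges G"
    by (auto simp: spanning_forests_def quotient_eq_image)
  have "C \<subseteq> verts G"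
    using conn_class_subset[of F "verts G" u] wf_graph_edge_subset[OF G] F u by blast
  moreover have "u \<in> C" using u(2) by simp
  ultimately show "root_weight X C \<le> root_weight {} C"
    using wf_graph_finite[OF G] by (intro root_weight_le_card) (auto intro: finite_subset)
qed


section \<open>Forest polynomials\<close>

definition forest_poly :: "'a graph \<Rightarrow> 'a set \<Rightarrow> int poly" where
  "forest_poly G X = Poly (map (rooted_coeff G X) [0..<Suc (card (edges G))])"

lemma coeff_forest_poly: "wf_graph G \<Longrightarrow> coeff (forest_poly G X) s = rooted_coeff G X s"
  unfolding forest_poly_def
  by (cases "s < Suc (card (edges G))")
    (simp_all add: nth_default_nth nth_default_beyond rooted_coeff_eq_0 del: upt_Suc)

lemma forest_poly_glue:
  assumes G1: "wf_graph G1" and G2: "wf_graph G2" and cut: "verts G1 \<inter> verts G2 = {v}"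
  shows "forest_poly (graph_union G1 G2) X =
    forest_poly G1 (X \<inter> verts G1) * forest_poly G2 (insert v (X \<inter> verts G2))
    + forest_poly G1 (insert v (X \<inter> verts G1)) * forest_poly G2 (X \<inter> verts G2)
    - forest_poly G1 (insert v (X \<inter> verts G1)) * forest_poly G2 (insert v (X \<inter> verts G2))"
  by (rule poly_eqI)
    (simp add: coeff_mult coeff_forest_poly G1 G2 wf_graph_union rooted_coeff_glue[OF G1 G2 cut]
      sum_subtractf sum.distrib)

lemma forest_poly_glue_root:
  assumes "wf_graph G1" "wf_graph G2" "verts G1 \<inter> verts G2 = {v}" "v \<in> X"
  shows "forest_poly (graph_union G1 G2) X = forest_poly G1 (X \<inter> verts G1) * forest_poly G2 (X \<inter> verts G2)"
proof -
  have "insert v (X \<inter> verts G1) = X \<inter> verts G1" "insert v (X \<inter> verts G2) = X \<inter> verts G2"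
    using assms(3,4) by auto
  then show ?thesis using forest_poly_glue[OF assms(1-3), of X] by simp
qed

definition nonneg_coeffs :: "int poly \<Rightarrow> bool" where
  "nonneg_coeffs p \<longleftrightarrow> (\<forall>i. coeff p i \<ge> 0)"

lemma nonneg_coeffs_add: "nonneg_coeffs p \<Longrightarrow> nonneg_coeffs q \<Longrightarrow> nonneg_coeffs (p + q)"
  unfolding nonneg_coeffs_def by simp

lemma nonneg_coeffs_mult: "nonneg_coeffs p \<Longrightarrow> nonneg_coeffs q \<Longrightarrow> nonneg_coeffs (p * q)"
  unfolding nonneg_coeffs_def coeff_mult by (auto intro!: sum_nonneg)

lemma nonneg_coeffs_pCons: "a \<ge> 0 \<Longrightarrow> nonneg_coeffs p \<Longrightarrow> nonneg_coeffs (pCons a p)"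
  unfolding nonneg_coeffs_def by (simp add: coeff_pCons split: nat.split)

lemma nonneg_coeffs_1: "nonneg_coeffs 1"
  unfolding nonneg_coeffs_def by (simp add: coeff_1)

lemma nonneg_coeffs_forest_poly: "wf_graph G \<Longrightarrow> nonneg_coeffs (forest_poly G X)"
  unfolding nonneg_coeffs_def by (simp add: coeff_forest_poly rooted_coeff_nonneg)

lemma nonneg_coeffs_forest_poly_diff:
  "wf_graph G \<Longrightarrow> nonneg_coeffs (forest_poly G {} - forest_poly G X)"
  unfolding nonneg_coeffs_def by (simp add: coeff_forest_poly rooted_coeff_le_unrooted)



section \<open>Relabelling vertices\<close>

definition map_graph :: "('a \<Rightarrow> 'b) \<Rightarrow> 'a graph \<Rightarrow> 'b graph" where
  "map_graph f G = (f ` verts G, (`) f ` edges G)"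

lemma verts_map_graph [simp]: "verts (map_graph f G) = f ` verts G"
  and edges_map_graph [simp]: "edges (map_graph f G) = (`) f ` edges G"
  unfolding map_graph_def by simp_all

lemma map_graph_comp: "map_graph g (map_graph f G) = map_graph (g \<circ> f) G"
  unfolding map_graph_def by (simp add: image_comp)

lemma wf_graph_map_graph:
  assumes G: "wf_graph G" and inj: "inj_on f (verts G)" shows "wf_graph (map_graph f G)"
  unfolding wf_graph_def
proof (intro conjI ballI)
  show "finite (verts (map_graph f G))" using wf_graph_finite[OF G] by simp
  fix e' assume "e' \<in> edges (map_graph f G)"
  then obtain e where e: "e \<in> edges G" "e' = f ` e" by auto
  from G e(1) obtain u w where uw: "u \<noteq> w" "e = {u, w}" "u \<in> verts G" "w \<in> verts G"
    by (rule wf_graph_edgeE)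
  then have "f u \<noteq> f w" using inj by (auto dest: inj_onD)
  then show "\<exists>u v. u \<noteq> v \<and> e' = {u, v} \<and> u \<in> verts (map_graph f G) \<and> v \<in> verts (map_graph f G)"
    using uw e by auto
qed

lemma map_graph_inv_into:
  assumes G: "wf_graph G" and inj: "inj_on f (verts G)"
  shows "map_graph (inv_into (verts G) f) (map_graph f G) = G"
proof -
  have "(`) (inv_into (verts G) f) ` (`) f ` edges G = (\<lambda>e. e) ` edges G"
    unfolding image_comp
  proof (rule image_cong[OF refl])
    fix e assume "e \<in> edges G"
    then have "e \<subseteq> verts G" by (rule wf_graph_edge_subset[OF G])
    then show "((`) (inv_into (verts G) f) \<circ> (`) f) e = e" using inj by (simp add: inv_into_image_cancel)
  qed
  then show ?thesis using inj unfolding map_graph_def by (simp add: verts_def edges_def)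
qed

lemma conn_image:
  assumes "(u, z) \<in> conn F" shows "(f u, f z) \<in> conn ((`) f ` F)"
proof -
  have "(u, z) \<in> {(a, b). {a, b} \<in> F}\<^sup>*" using assms unfolding conn_def .
  then show ?thesis
  proof (induction rule: rtrancl_induct)
    case (step y z)
    then have "f ` {y, z} \<in> (`) f ` F" by (intro imageI) simp
    then have "(f y, f z) \<in> conn ((`) f ` F)" by (simp add: conn_edge)
    then show ?case using conn_trans[OF step.IH] by blast
  qed simp
qed

lemma conn_image_class:
  assumes F: "\<And>e. e \<in> F \<Longrightarrow> e \<subseteq> V \<and> card e = 2" and inj: "inj_on f V" and u: "u \<in> V"
  shows "conn ((`) f ` F) `` {f u} = f ` (conn F `` {u})"
proof
  show "f ` (conn F `` {u}) \<subseteq> conn ((`) f ` F) `` {f u}" using conn_image by fast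
  have class_V: "conn F `` {u} \<subseteq> V" using conn_class_subset[of F V u] F u by blast
  show "conn ((`) f ` F) `` {f u} \<subseteq> f ` (conn F `` {u})"
  proof (rule conn_class_subset_closed)
    fix y z assume "{y, z} \<in> (`) f ` F" and y: "y \<in> f ` (conn F `` {u})"
    then obtain e where e: "e \<in> F" "{y, z} = f ` e" by blast
    obtain c where c: "(u, c) \<in> conn F" "y = f c" using y by blast
    obtain r where r: "r \<in> e" "z = f r" using e(2) by blast
    have c_in_e: "c \<in> e"
    proof -
      obtain c' where "c' \<in> e" "f c' = y" using e(2) by (metis imageE insertI1)
      moreover have "c \<in> V" using c(1) class_V by blast
      ultimately show ?thesis using inj c(2) F[OF e(1)] by (metis inj_onD subsetD)
    qed
    have "(c, r) \<in> conn F"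
    proof (cases "r = c")
      case False
      then have "e = {c, r}" using c_in_e r(1) F[OF e(1)] by (auto simp: card_2_iff)
      then show ?thesis using e(1) by (simp add: conn_edge)
    qed simp
    then show "z \<in> f ` (conn F `` {u})" using conn_trans[OF c(1)] r(2) by blast
  qed (use u in simp)
qed


lemma conn_image_iff:
  assumes F: "\<And>e. e \<in> F \<Longrightarrow> e \<subseteq> V \<and> card e = 2" and inj: "inj_on f V"
    and u: "u \<in> V" and w: "w \<in> V"
  shows "(f u, f w) \<in> conn ((`) f ` F) \<longleftrightarrow> (u, w) \<in> conn F"
proof -
  have "conn F `` {u} \<subseteq> V" using conn_class_subset[of F V u] F u by blast
  then have "f w \<in> f ` (conn F `` {u}) \<longleftrightarrow> w \<in> conn F `` {u}"
    by (rule inj_on_image_mem_iff[OF inj w])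
  then show ?thesis using conn_image_class[OF F inj u] by blast
qed

lemma acyclic_edges_image:
  assumes F: "\<And>e. e \<in> F \<Longrightarrow> e \<subseteq> V \<and> card e = 2" and inj: "inj_on f V"
    and acyclic: "acyclic_edges F"
  shows "acyclic_edges ((`) f ` F)"
  unfolding acyclic_edges_def
proof (intro ballI allI impI)
  fix e' u' w' assume e': "e' \<in> (`) f ` F" "e' = {u', w'}"
  then obtain e where e: "e \<in> F" "e' = f ` e" by blast
  then obtain p q where pq: "e = {p, q}" using F[OF e(1)] by (auto simp: card_2_iff)
  have pq_V: "p \<in> V" "q \<in> V" using F[OF e(1)] pq by auto
  have F_e: "\<And>e'. e' \<in> F - {e} \<Longrightarrow> e' \<subseteq> V \<and> card e' = 2" using F by blast
  have "(`) f ` F - {e'} = (`) f ` (F - {e})"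
    using inj_on_image_set_diff[OF inj_on_image_Pow[OF inj], of F "{e}"] F e by auto
  moreover have pq_conn: "(p, q) \<notin> conn (F - {e})"
    using acyclic e(1) pq unfolding acyclic_edges_def by blast
  then have "(q, p) \<notin> conn (F - {e})" using conn_sym[of q p] by blast
  with pq_conn have "(f p, f q) \<notin> conn ((`) f ` (F - {e}))" "(f q, f p) \<notin> conn ((`) f ` (F - {e}))"
    using conn_image_iff[of "F - {e}" V f, OF F_e inj] pq_V by simp_all
  moreover have "(u' = f p \<and> w' = f q) \<or> (u' = f q \<and> w' = f p)"
    using e' e pq by (auto simp: doubleton_eq_iff)
  ultimately show "(u', w') \<notin> conn ((`) f ` F - {e'})" by auto
qed

lemma root_weight_image:
  assumes inj: "inj_on f V" and "X \<subseteq> V" "C \<subseteq> V"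
  shows "root_weight (f ` X) (f ` C) = root_weight X C"
proof -
  have "f ` X \<inter> f ` C = f ` (X \<inter> C)" using inj_on_image_Int[OF assms] by simp
  moreover have "card (f ` (X \<inter> C)) = card (X \<inter> C)" "card (f ` C) = card C"
    using inj assms(3) by (auto intro!: card_image intro: inj_on_subset)
  ultimately show ?thesis unfolding root_weight_def by simp
qed

lemma forest_weight_image:
  assumes F: "\<And>e. e \<in> F \<Longrightarrow> e \<subseteq> V \<and> card e = 2" and inj: "inj_on f V" and X: "X \<subseteq> V"
  shows "forest_weight (f ` V) ((`) f ` F) (f ` X) = forest_weight V F X"
proof -
  have classes: "V // conn F \<subseteq> Pow V"
    using conn_class_subset[of F V] F by (auto simp: quotient_eq_image)
  have "f ` V // conn ((`) f ` F) = (\<lambda>u. conn ((`) f ` F) `` {f u}) ` V"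
    by (simp add: quotient_eq_image image_comp)
  also have "\<dots> = (`) f ` (V // conn F)"
    using conn_image_class[OF F inj] by (simp add: quotient_eq_image image_comp)
  finally have "forest_weight (f ` V) ((`) f ` F) (f ` X) = (\<Prod>C\<in>V // conn F. root_weight (f ` X) (f ` C))"
    unfolding forest_weight_def
    using prod.reindex[OF inj_on_subset[OF inj_on_image_Pow[OF inj] classes]] by simp
  also have "\<dots> = forest_weight V F X"
    unfolding forest_weight_def using root_weight_image[OF inj X] classes by (intro prod.cong) auto
  finally show ?thesis .
qed

lemma wf_graph_edge_card: "wf_graph G \<Longrightarrow> e \<in> edges G \<Longrightarrow> e \<subseteq> verts G \<and> card e = 2"
  by (erule wf_graph_edgeE) auto

lemma spanning_forests_map_graph:
  assumes G: "wf_graph G" and inj: "inj_on f (verts G)" and F: "F \<in> spanning_forests G s"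
  shows "(`) f ` F \<in> spanning_forests (map_graph f G) s"
proof -
  have sub: "F \<subseteq> edges G" and "card F = s" and "acyclic_edges F"
    using F by (auto simp: spanning_forests_def)
  moreover have "inj_on ((`) f) F"
    using inj_on_image_Pow[OF inj] sub wf_graph_edge_subset[OF G] by (blast intro: inj_on_subset)
  moreover have "acyclic_edges ((`) f ` F)"
    using acyclic_edges_image[OF _ inj \<open>acyclic_edges F\<close>] wf_graph_edge_card[OF G] sub by blast
  ultimately show ?thesis by (auto simp: spanning_forests_def card_image)
qed

lemma bij_betw_spanning_forests_map_graph:
  assumes G: "wf_graph G" and inj: "inj_on f (verts G)"
  shows "bij_betw ((`) ((`) f)) (spanning_forests G s) (spanning_forests (map_graph f G) s)"
proof (rule bij_betw_byWitness[where f' = "(`) ((`) (inv_into (verts G) f))"])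
  let ?g = "inv_into (verts G) f"
  have G': "wf_graph (map_graph f G)" using wf_graph_map_graph[OF G inj] .
  have inj': "inj_on ?g (verts (map_graph f G))" by (simp add: inj_on_inv_into)
  show "\<forall>F\<in>spanning_forests G s. (`) ((`) ?g) ((`) ((`) f) F) = F"
  proof
    fix F assume "F \<in> spanning_forests G s"
    then have "\<And>e. e \<in> F \<Longrightarrow> e \<subseteq> verts G"
      using wf_graph_edge_subset[OF G] by (auto simp: spanning_forests_def)
    then have "(`) ?g ` (`) f ` F = (\<lambda>e. e) ` F"
      unfolding image_comp by (intro image_cong refl) (simp add: inv_into_image_cancel[OF inj])
    then show "(`) ((`) ?g) ((`) ((`) f) F) = F" by simp
  qed
  show "\<forall>F\<in>spanning_forests (map_graph f G) s. (`) ((`) f) ((`) ((`) ?g) F) = F"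
  proof
    fix F assume "F \<in> spanning_forests (map_graph f G) s"
    then have "F \<subseteq> edges (map_graph f G)" by (simp add: spanning_forests_def)
    then have "\<And>e. e \<in> F \<Longrightarrow> e \<subseteq> f ` verts G"
      using wf_graph_edge_subset[OF G'] by (metis subsetD verts_map_graph)
    then have "(`) f ` (`) ?g ` F = (\<lambda>e. e) ` F"
      unfolding image_comp by (intro image_cong refl) (simp add: image_inv_into_cancel[OF refl])
    then show "(`) ((`) f) ((`) ((`) ?g) F) = F" by simp
  qed
  show "(`) ((`) f) ` spanning_forests G s \<subseteq> spanning_forests (map_graph f G) s"
    using spanning_forests_map_graph[OF G inj] by blast
  show "(`) ((`) ?g) ` spanning_forests (map_graph f G) s \<subseteq> spanning_forests G s"
    using spanning_forests_map_graph[OF G' inj'] map_graph_inv_into[OF G inj] by auto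
qed

lemma rooted_coeff_map_graph:
  assumes G: "wf_graph G" and inj: "inj_on f (verts G)" and X: "X \<subseteq> verts G"
  shows "rooted_coeff (map_graph f G) (f ` X) s = rooted_coeff G X s"
proof -
  have "rooted_coeff (map_graph f G) (f ` X) s =
      (\<Sum>F\<in>spanning_forests G s. forest_weight (f ` verts G) ((`) f ` F) (f ` X))"
    unfolding rooted_coeff_def
    using sum.reindex_bij_betw[OF bij_betw_spanning_forests_map_graph[OF G inj], symmetric] by simp
  also have "\<dots> = rooted_coeff G X s"
    unfolding rooted_coeff_def
  proof (rule sum.cong[OF refl])
    fix F assume "F \<in> spanning_forests G s"
    then have "\<And>e. e \<in> F \<Longrightarrow> e \<subseteq> verts G \<and> card e = 2"
      using wf_graph_edge_card[OF G] by (auto simp: spanning_forests_def)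
    then show "forest_weight (f ` verts G) ((`) f ` F) (f ` X) = forest_weight (verts G) F X"
      using forest_weight_image[OF _ inj X] by blast
  qed
  finally show ?thesis .
qed

lemma forest_poly_map_graph:
  assumes "wf_graph G" "inj_on f (verts G)" "X \<subseteq> verts G"
  shows "forest_poly (map_graph f G) (f ` X) = forest_poly G X"
  by (rule poly_eqI)
    (simp add: coeff_forest_poly assms wf_graph_map_graph rooted_coeff_map_graph)


lemma map_graph_automorphism:
  assumes H: "wf_graph H" and eta: "is_automorphism H \<eta>" shows "map_graph \<eta> H = H"
proof -
  have bij: "bij_betw \<eta> (verts H) (verts H)"
    and adj: "\<And>u v. u \<in> verts H \<Longrightarrow> v \<in> verts H \<Longrightarrow> {u, v} \<in> edges H \<longleftrightarrow> {\<eta> u, \<eta> v} \<in> edges H"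
    using eta unfolding is_automorphism_def by blast+
  then have V: "\<eta> ` verts H = verts H" by (simp add: bij_betw_def)
  have "(`) \<eta> ` edges H = edges H"
  proof (intro equalityI subsetI)
    fix e' assume "e' \<in> (`) \<eta> ` edges H"
    then obtain e where e: "e \<in> edges H" "e' = \<eta> ` e" by blast
    from H e(1) obtain p q where "e = {p, q}" "p \<in> verts H" "q \<in> verts H" by (rule wf_graph_edgeE)
    then show "e' \<in> edges H" using adj e by auto
  next
    fix e assume e: "e \<in> edges H"
    from H e obtain p q where pq: "e = {p, q}" "p \<in> verts H" "q \<in> verts H" by (rule wf_graph_edgeE)
    then obtain p' q' where "p' \<in> verts H" "q' \<in> verts H" "p = \<eta> p'" "q = \<eta> q'"
      using V by (metis imageE)
    then show "e \<in> (`) \<eta> ` edges H" using adj e pq by (intro image_eqI[of _ _ "{p', q'}"]) auto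
  qed
  then show ?thesis using V unfolding map_graph_def by (simp add: verts_def edges_def)
qed

lemma forest_poly_automorphism:
  assumes "wf_graph H" "is_automorphism H \<eta>" "X \<subseteq> verts H"
  shows "forest_poly H (\<eta> ` X) = forest_poly H X"
proof -
  have "inj_on \<eta> (verts H)" using assms(2) by (simp add: is_automorphism_def bij_betw_def)
  then show ?thesis using forest_poly_map_graph[OF assms(1) _ assms(3)] map_graph_automorphism[OF assms(1,2)]
    by metis
qed

lemma identify_graph_union:
  assumes G1: "wf_graph G1" and w: "w \<notin> verts G1"
  shows "identify (graph_union G1 G2) u w = graph_union G1 (map_graph (\<lambda>z. if z = w then u else z) G2)"
proof -
  let ?f = "\<lambda>z. if z = w then u else z"
  have fixes_G1: "?f ` S = S" if "S \<subseteq> verts G1" for S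
    using that w by (auto simp: image_iff)
  have "(`) ?f ` edges G1 = (\<lambda>e. e) ` edges G1"
    using fixes_G1 wf_graph_edge_subset[OF G1] by (intro image_cong) auto
  then show ?thesis
    using fixes_G1[of "verts G1"] unfolding identify_def graph_union_def map_graph_def
    by (simp add: image_Un)
qed


section \<open>Paths\<close>

definition path_edges :: "'a list \<Rightarrow> 'a set set" where
  "path_edges vs = {{vs ! i, vs ! Suc i} | i. Suc i < length vs}"

lemma path_edges_single: "path_edges [v] = {}"
  unfolding path_edges_def by simp

lemma path_edges_Cons_Cons: "path_edges (v # w # vs) = insert {v, w} (path_edges (w # vs))"
proof -
  have "{{(v # w # vs) ! i, (v # w # vs) ! Suc i} | i. Suc i < length (v # w # vs)} =
      insert {v, w} {{(w # vs) ! i, (w # vs) ! Suc i} | i. Suc i < length (w # vs)}"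
  proof (intro equalityI subsetI)
    fix e assume "e \<in> {{(v # w # vs) ! i, (v # w # vs) ! Suc i} | i. Suc i < length (v # w # vs)}"
    then obtain i where "e = {(v # w # vs) ! i, (v # w # vs) ! Suc i}" "Suc i < length (v # w # vs)"
      by blast
    then show "e \<in> insert {v, w} {{(w # vs) ! i, (w # vs) ! Suc i} | i. Suc i < length (w # vs)}"
      by (cases i) auto
  next
    fix e assume "e \<in> insert {v, w} {{(w # vs) ! i, (w # vs) ! Suc i} | i. Suc i < length (w # vs)}"
    then consider "e = {v, w}" | i where "e = {(w # vs) ! i, (w # vs) ! Suc i}" "Suc i < length (w # vs)"
      by blast
    then show "e \<in> {{(v # w # vs) ! i, (v # w # vs) ! Suc i} | i. Suc i < length (v # w # vs)}"
    proof cases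
      case 1
      then show ?thesis by (intro CollectI exI[of _ 0]) simp
    next
      case (2 i)
      then show ?thesis by (intro CollectI exI[of _ "Suc i"]) simp
    qed
  qed
  then show ?thesis unfolding path_edges_def .
qed

lemma wf_graph_path:
  assumes "distinct vs" shows "wf_graph (set vs, path_edges vs)"
  unfolding wf_graph_def path_edges_def
proof (intro conjI ballI, simp_all, clarify)
  fix i assume i: "Suc i < length vs"
  then have "vs ! i \<noteq> vs ! Suc i" using assms by (simp add: nth_eq_iff_index_eq)
  moreover have "vs ! i \<in> set vs" "vs ! Suc i \<in> set vs" using i by simp_all
  ultimately show "\<exists>u v. u \<noteq> v \<and> {vs ! i, vs ! Suc i} = {u, v} \<and> u \<in> set vs \<and> v \<in> set vs"
    by blast
qed

lemma is_path_with_endE: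
  assumes "is_path_with_end A a"
  obtains vs where "distinct vs" "vs \<noteq> []" "hd vs = a" "A = (set vs, path_edges vs)"
proof -
  obtain vs where "vs \<noteq> []" "distinct vs" "hd vs = a" "verts A = set vs"
    "edges A = {{vs ! i, vs ! Suc i} | i. Suc i < length vs}"
    using assms unfolding is_path_with_end_def by blast
  moreover have "A = (verts A, edges A)" unfolding verts_def edges_def by simp
  ultimately show ?thesis using that unfolding path_edges_def by auto
qed


lemma spanning_forests_0:
  assumes "wf_graph G" shows "spanning_forests G 0 = {{}}"
proof -
  have empty: "F = {}" if "F \<subseteq> edges G" "card F = 0" for F
    using that finite_subset[OF _ wf_graph_finite_edges[OF assms]] by auto
  have "acyclic_edges {}" by (simp add: acyclic_edges_def)
  show ?thesis
  proof (intro equalityI subsetI)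
    fix F assume "F \<in> spanning_forests G 0"
    then show "F \<in> {{}}" using empty by (simp add: spanning_forests_def)
  qed (simp add: spanning_forests_def \<open>acyclic_edges {}\<close>)
qed

lemma forest_poly_vertex: "forest_poly ({u}, {}) X = 1"
proof -
  have G: "wf_graph ({u}, {})" unfolding wf_graph_def by simp
  have "rooted_coeff ({u}, {}) X 0 = 1"
    unfolding rooted_coeff_def forest_weight_def spanning_forests_0[OF G] by (simp add: singleton_quotient)
  then show ?thesis
    by (intro poly_eqI) (simp add: coeff_forest_poly[OF G] rooted_coeff_eq_0[OF G] coeff_1)
qed

lemma forest_poly_edge:
  assumes pq: "p \<noteq> q" shows "forest_poly ({p, q}, {{p, q}}) X = [:1, root_weight X {p, q}:]"
proof -
  have G: "wf_graph ({p, q}, {{p, q}})" using pq unfolding wf_graph_def by auto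
  have "(p, q) \<in> conn {{p, q}}" by (simp add: conn_edge)
  then have "conn {{p, q}} `` {p} = {p, q}" "conn {{p, q}} `` {q} = {p, q}"
    using conn_class_subset[of "{{p, q}}" "{p, q}"] conn_sym conn_class_eq by fastforce+
  then have classes: "{p, q} // conn {{p, q}} = {{p, q}}" by (simp add: quotient_eq_image)
  have "acyclic_edges {{p, q}}"
    unfolding acyclic_edges_def using pq by (auto simp: doubleton_eq_iff)
  then have "spanning_forests ({p, q}, {{p, q}}) 1 = {{{p, q}}}"
    by (auto simp: spanning_forests_def card_1_singleton_iff subset_singleton_iff)
  then have "rooted_coeff ({p, q}, {{p, q}}) X 1 = root_weight X {p, q}"
    unfolding rooted_coeff_def forest_weight_def by (simp add: classes)
  moreover have "rooted_coeff ({p, q}, {{p, q}}) X 0 = 1"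
    unfolding rooted_coeff_def forest_weight_def spanning_forests_0[OF G] using pq
    by (simp add: quotient_eq_image)
  ultimately show ?thesis
    by (intro poly_eqI) (auto simp: coeff_forest_poly[OF G] rooted_coeff_eq_0[OF G] coeff_pCons
      split: nat.split)
qed

fun path_poly :: "nat \<Rightarrow> int poly" and path_poly_end :: "nat \<Rightarrow> int poly" where
  "path_poly 0 = 1"
| "path_poly (Suc k) = [:0, 1:] * path_poly_end k + [:1, 1:] * path_poly k"
| "path_poly_end 0 = 1"
| "path_poly_end (Suc k) = [:0, 1:] * path_poly_end k + path_poly k"

lemma forest_poly_path:
  "distinct vs \<Longrightarrow> vs \<noteq> [] \<Longrightarrow>
    forest_poly (set vs, path_edges vs) {} = path_poly (length vs - 1) \<and>
    forest_poly (set vs, path_edges vs) {hd vs} = path_poly_end (length vs - 1)"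
proof (induction vs rule: induct_list012)
  case (2 v)
  then show ?case by (simp add: path_edges_single forest_poly_vertex)
next
  case (3 v w vs)
  let ?E = "({v, w}, {{v, w}}) :: 'a graph" and ?P = "(set (w # vs), path_edges (w # vs))"
  have vw: "v \<noteq> w" and v: "v \<notin> set (w # vs)" using "3.prems" by auto
  have IH: "forest_poly ?P {} = path_poly (length vs)" "forest_poly ?P {w} = path_poly_end (length vs)"
    using "3.IH"(2) "3.prems" by auto
  have E: "wf_graph ?E" using vw unfolding wf_graph_def by auto
  have P: "wf_graph ?P" using "3.prems" wf_graph_path[of "w # vs"] by simp
  have cut: "verts ?E \<inter> verts ?P = {w}" using v by auto
  have split: "(set (v # w # vs), path_edges (v # w # vs)) = graph_union ?E ?P"
    unfolding graph_union_def path_edges_Cons_Cons by auto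
  have "{v} \<inter> verts ?P = {}" using v by auto
  then have "forest_poly (graph_union ?E ?P) {} = [:1, 2:] * path_poly_end (length vs)
      + [:1, 1:] * path_poly (length vs) - [:1, 1:] * path_poly_end (length vs)"
    "forest_poly (graph_union ?E ?P) {v} = [:1, 1:] * path_poly_end (length vs)
      + path_poly (length vs) - path_poly_end (length vs)"
    using forest_poly_glue[OF E P cut, of "{}"] forest_poly_glue[OF E P cut, of "{v}"] IH vw
    by (simp_all add: forest_poly_edge root_weight_def insert_commute)
  moreover have "[:1, 2:] * x + [:1, 1:] * y - [:1, 1:] * x = [:0, 1:] * x + [:1, 1:] * (y :: int poly)"
    "[:1, 1:] * x + y - x = [:0, 1:] * x + (y :: int poly)" for x y
  proof -
    define t :: "int poly" where "t = [:0, 1:]"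
    have e: "[:1, 2:] = 1 + t + t" "[:1, 1:] = 1 + t" by (simp_all add: t_def one_pCons)
    show "[:1, 2:] * x + [:1, 1:] * y - [:1, 1:] * x = [:0, 1:] * x + [:1, 1:] * y"
      "[:1, 1:] * x + y - x = [:0, 1:] * x + y"
      unfolding t_def[symmetric] e by algebra+
  qed
  ultimately show ?case using split by simp
qed simp

lemma forest_poly_path_with_end:
  assumes "is_path_with_end A a"
  shows "wf_graph A" "a \<in> verts A" "forest_poly A {} = path_poly (card (verts A) - 1)"
    "forest_poly A {a} = path_poly_end (card (verts A) - 1)"
proof -
  obtain vs where vs: "distinct vs" "vs \<noteq> []" "hd vs = a" "A = (set vs, path_edges vs)"
    using assms by (rule is_path_with_endE)
  then show "wf_graph A" "a \<in> verts A" by (auto simp: wf_graph_path)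
  show "forest_poly A {} = path_poly (card (verts A) - 1)" "forest_poly A {a} = path_poly_end (card (verts A) - 1)"
    using forest_poly_path[OF vs(1,2)] vs by (simp_all add: distinct_card)
qed


lemma nonneg_coeffs_path_poly: "nonneg_coeffs (path_poly k) \<and> nonneg_coeffs (path_poly_end k)"
proof (induction k)
  case 0
  then show ?case by (simp add: nonneg_coeffs_1)
next
  case (Suc k)
  have "nonneg_coeffs [:0, 1:]" "nonneg_coeffs [:1, 1:]"
    unfolding nonneg_coeffs_def by (simp_all add: coeff_pCons split: nat.split)
  then show ?case using Suc.IH
    by (simp del: mult_pCons_left add: nonneg_coeffs_add nonneg_coeffs_mult)
qed

text \<open>Each step multiplies the determinant by t^2, which reduces its nonnegativity to the case j = 0.\<close>

lemma path_poly_cross_Suc: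
  "path_poly_end (Suc j) * path_poly (Suc k) - path_poly (Suc j) * path_poly_end (Suc k) =
    [:0, 0, 1:] * (path_poly_end j * path_poly k - path_poly j * path_poly_end k)"
proof -
  define t :: "int poly" where "t = [:0, 1:]"
  have "[:1, 1:] = 1 + t" "[:0, 0, 1:] = t * t" by (simp_all add: t_def one_pCons)
  then show ?thesis unfolding path_poly.simps path_poly_end.simps t_def[symmetric] by algebra
qed

lemma path_poly_cross_0:
  "path_poly_end 0 * path_poly (Suc k) - path_poly 0 * path_poly_end (Suc k) = [:0, 1:] * path_poly k"
proof -
  define t :: "int poly" where "t = [:0, 1:]"
  have "[:1, 1:] = 1 + t" by (simp add: t_def one_pCons)
  then show ?thesis unfolding path_poly.simps path_poly_end.simps t_def[symmetric] by algebra
qed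

lemma nonneg_coeffs_path_poly_cross:
  "j \<le> k \<Longrightarrow> nonneg_coeffs (path_poly_end j * path_poly k - path_poly j * path_poly_end k)"
proof (induction j arbitrary: k)
  case 0
  then show ?case
  proof (cases k)
    case (Suc k')
    then show ?thesis using nonneg_coeffs_path_poly[of k']
      by (simp only: path_poly_cross_0) (simp add: nonneg_coeffs_pCons)
  qed (simp add: nonneg_coeffs_def)
next
  case (Suc j)
  then obtain k' where "k = Suc k'" "j \<le> k'" by (cases k) auto
  then show ?case using Suc.IH[of k']
    by (simp only: path_poly_cross_Suc) (simp add: nonneg_coeffs_pCons)
qed



section \<open>Moving a pendant graph between two vertices\<close>

lemma forest_poly_attach:
  assumes R: "wf_graph R" and D: "wf_graph D" and disjoint: "verts R \<inter> verts D = {}"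
    and a: "a \<in> verts R" and d: "d \<in> verts D"
  shows "wf_graph (identify (graph_union R D) a d)"
    "forest_poly (identify (graph_union R D) a d) {} =
      forest_poly R {} * forest_poly D {d} + forest_poly R {a} * (forest_poly D {} - forest_poly D {d})"
proof -
  let ?f = "\<lambda>z. if z = d then a else z"
  have inj: "inj_on ?f (verts D)" using a disjoint by (auto simp: inj_on_def)
  have Da: "wf_graph (map_graph ?f D)" using wf_graph_map_graph[OF D inj] .
  have eq: "identify (graph_union R D) a d = graph_union R (map_graph ?f D)"
    using identify_graph_union[OF R] d disjoint by blast
  then show "wf_graph (identify (graph_union R D) a d)" using wf_graph_union[OF R Da] by simp
  have cut: "verts R \<inter> verts (map_graph ?f D) = {a}" using a d disjoint by force
  have "forest_poly (map_graph ?f D) {a} = forest_poly D {d}"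
    "forest_poly (map_graph ?f D) {} = forest_poly D {}"
    using forest_poly_map_graph[OF D inj, of "{d}"] forest_poly_map_graph[OF D inj, of "{}"] d by simp_all
  then show "forest_poly (identify (graph_union R D) a d) {} =
      forest_poly R {} * forest_poly D {d} + forest_poly R {a} * (forest_poly D {} - forest_poly D {d})"
    unfolding eq forest_poly_glue[OF R Da cut] by (simp add: algebra_simps)
qed

lemma lap_coeff_attach_mono:
  assumes R: "wf_graph R" and D: "wf_graph D" and disjoint: "verts R \<inter> verts D = {}"
    and a: "a \<in> verts R" and b: "b \<in> verts R" and d: "d \<in> verts D"
    and diff: "nonneg_coeffs (forest_poly R {a} - forest_poly R {b})"
  shows "lap_coeff (identify (graph_union R D) b d) s \<le> lap_coeff (identify (graph_union R D) a d) s"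
proof -
  note Ga = forest_poly_attach[OF R D disjoint a d] and Gb = forest_poly_attach[OF R D disjoint b d]
  have "forest_poly (identify (graph_union R D) a d) {} - forest_poly (identify (graph_union R D) b d) {} =
      (forest_poly R {a} - forest_poly R {b}) * (forest_poly D {} - forest_poly D {d})"
    unfolding Ga(2) Gb(2) by (simp add: algebra_simps)
  moreover have "nonneg_coeffs \<dots>"
    using diff nonneg_coeffs_forest_poly_diff[OF D] by (rule nonneg_coeffs_mult)
  ultimately have "rooted_coeff (identify (graph_union R D) b d) {} s \<le> rooted_coeff (identify (graph_union R D) a d) {} s"
    unfolding nonneg_coeffs_def using coeff_forest_poly[OF Ga(1)] coeff_forest_poly[OF Gb(1)]
    by (metis coeff_diff diff_ge_0_iff_ge)
  then show ?thesis by (simp flip: lap_coeff_eq_rooted_coeff)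
qed

lemma forest_poly_glue_two_roots:
  assumes G1: "wf_graph G1" and G2: "wf_graph G2" and cut: "verts G1 \<inter> verts G2 = {v}"
    and u: "u \<in> verts G1" "u \<noteq> v"
  shows "forest_poly (graph_union G1 G2) {v} = forest_poly G1 {v} * forest_poly G2 {v}"
    "forest_poly (graph_union G1 G2) {u, v} = forest_poly G1 {u, v} * forest_poly G2 {v}"
    "forest_poly (graph_union G1 G2) {u} =
      forest_poly G1 {u} * forest_poly G2 {v} + forest_poly G1 {u, v} * (forest_poly G2 {} - forest_poly G2 {v})"
proof -
  have "{v} \<inter> verts G1 = {v}" "{v} \<inter> verts G2 = {v}" "{u, v} \<inter> verts G1 = {u, v}"
    "{u, v} \<inter> verts G2 = {v}" "{u} \<inter> verts G1 = {u}" "{u} \<inter> verts G2 = {}"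
    using cut u by auto
  then show "forest_poly (graph_union G1 G2) {v} = forest_poly G1 {v} * forest_poly G2 {v}"
    "forest_poly (graph_union G1 G2) {u, v} = forest_poly G1 {u, v} * forest_poly G2 {v}"
    "forest_poly (graph_union G1 G2) {u} =
      forest_poly G1 {u} * forest_poly G2 {v} + forest_poly G1 {u, v} * (forest_poly G2 {} - forest_poly G2 {v})"
    using forest_poly_glue_root[OF G1 G2 cut, of "{v}"] forest_poly_glue_root[OF G1 G2 cut, of "{u, v}"]
      forest_poly_glue[OF G1 G2 cut, of "{u}"]
    by (simp_all add: insert_commute algebra_simps)
qed

lemma forest_poly_pendant_paths:
  assumes H: "wf_graph H" and A: "is_path_with_end A a" and B: "is_path_with_end B b"
    and HA: "verts H \<inter> verts A = {a}" and HB: "verts H \<inter> verts B = {b}" and AB: "verts A \<inter> verts B = {}"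
  defines "R \<equiv> graph_union (graph_union H A) B"
    and "p \<equiv> card (verts A) - 1" and "q \<equiv> card (verts B) - 1"
  shows "forest_poly R {a} - forest_poly R {b} =
    (forest_poly H {a} - forest_poly H {b}) * path_poly_end p * path_poly_end q
    + forest_poly H {a, b} * (path_poly_end p * path_poly q - path_poly p * path_poly_end q)"
proof -
  note A' = forest_poly_path_with_end[OF A] and B' = forest_poly_path_with_end[OF B]
  have K: "wf_graph (graph_union H A)" using wf_graph_union[OF H A'(1)] .
  have KB: "verts (graph_union H A) \<inter> verts B = {b}" using HB AB by auto
  have ab: "a \<noteq> b" "a \<in> verts (graph_union H A)" "b \<in> verts H" using A'(2) AB HB by auto
  note HA_glue = forest_poly_glue_two_roots[OF H A'(1) HA ab(3) ab(1)[symmetric]]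
  note KB_glue = forest_poly_glue_two_roots[OF K B'(1) KB ab(2) ab(1)]
  have "forest_poly (graph_union H A) {a, b} = forest_poly H {a, b} * forest_poly A {a}"
    using HA_glue(2) by (simp add: insert_commute)
  then show ?thesis
    unfolding R_def KB_glue HA_glue A'(3,4) B'(3,4) p_def q_def
    by (simp add: insert_commute algebra_simps)
qed

lemma nonneg_coeffs_pendant_paths_diff:
  assumes H: "wf_graph H" and A: "is_path_with_end A a" and B: "is_path_with_end B b"
    and HA: "verts H \<inter> verts A = {a}" and HB: "verts H \<inter> verts B = {b}" and AB: "verts A \<inter> verts B = {}"
    and symmetric: "forest_poly H {a} = forest_poly H {b}" and shorter: "card (verts A) \<le> card (verts B)"
  shows "nonneg_coeffs (forest_poly (graph_union (graph_union H A) B) {a}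
    - forest_poly (graph_union (graph_union H A) B) {b})"
  unfolding forest_poly_pendant_paths[OF H A B HA HB AB] symmetric
  using shorter by (simp add: nonneg_coeffs_mult nonneg_coeffs_forest_poly[OF H] nonneg_coeffs_path_poly_cross)

lemma relabel_two_vertices:
  assumes H: "wf_graph H" and xy: "x \<in> verts H" "y \<in> verts H" "x \<noteq> y"
    and ab: "a \<notin> verts H" "b \<notin> verts H" "a \<noteq> b"
  defines "g \<equiv> \<lambda>z. if z = x then a else if z = y then b else z"
  shows "wf_graph (map_graph g H)" "verts (map_graph g H) = insert a (insert b (verts H - {x, y}))"
    "forest_poly (map_graph g H) {a} = forest_poly H {x}" "forest_poly (map_graph g H) {b} = forest_poly H {y}"
proof -
  have inj: "inj_on g (verts H)" using ab unfolding g_def inj_on_def by auto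
  show "wf_graph (map_graph g H)" using wf_graph_map_graph[OF H inj] .
  show "verts (map_graph g H) = insert a (insert b (verts H - {x, y}))"
    using xy unfolding g_def by auto
  show "forest_poly (map_graph g H) {a} = forest_poly H {x}" "forest_poly (map_graph g H) {b} = forest_poly H {y}"
    using forest_poly_map_graph[OF H inj, of "{x}"] forest_poly_map_graph[OF H inj, of "{y}"] xy
    unfolding g_def by simp_all
qed

lemma identify_two_pendant_graphs:
  assumes A: "wf_graph A" and B: "wf_graph B" and a: "a \<in> verts A" and b: "b \<in> verts B"
    and xy: "x \<in> verts H" "y \<in> verts H" "x \<noteq> y"
    and AH: "verts A \<inter> verts H = {}" and BH: "verts B \<inter> verts H = {}"
  shows "identify (identify (graph_union (graph_union A B) H) a x) b y =
    graph_union (graph_union (map_graph (\<lambda>z. if z = x then a else if z = y then b else z) H) A) B"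
proof -
  let ?AB = "graph_union A B"
  have AB: "wf_graph ?AB" using wf_graph_union[OF A B] .
  have "x \<notin> verts ?AB" "y \<notin> verts ?AB" using xy AH BH by auto
  then have "identify (identify (graph_union ?AB H) a x) b y =
      graph_union ?AB (map_graph ((\<lambda>z. if z = y then b else z) \<circ> (\<lambda>z. if z = x then a else z)) H)"
    using identify_graph_union[OF AB] by (simp add: map_graph_comp)
  moreover have "(\<lambda>z. if z = y then b else z) \<circ> (\<lambda>z. if z = x then a else z) =
      (\<lambda>z. if z = x then a else if z = y then b else z)"
    using a xy AH by (auto simp: fun_eq_iff)
  ultimately show ?thesis unfolding graph_union_def by (simp add: Un_ac)
qed


theorem mainTheorem6:
  fixes A B D H :: "'a graph" and a b d x y :: 'a and \<eta> :: "'a \<Rightarrow> 'a"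
  assumes "wf_graph A" "wf_graph B" "wf_graph D" "wf_graph H"
    and "verts A \<inter> verts B = {}" "verts A \<inter> verts D = {}" "verts A \<inter> verts H = {}"
    and "verts B \<inter> verts D = {}" "verts B \<inter> verts H = {}" "verts D \<inter> verts H = {}"
    and "is_path_with_end A a" and "is_path_with_end B b"
    and "d \<in> verts D" and "\<exists>e\<in>edges D. d \<in> e"
    and "x \<in> verts H" "y \<in> verts H" "x \<noteq> y"
    and "is_automorphism H \<eta>" "\<eta> x = y" "\<eta> y = x"
    and "card (verts A) \<le> card (verts B)"
  shows "let R = identify (identify (graph_union (graph_union A B) H) a x) b y;
             Ga = identify (graph_union R D) a d;
             Gb = identify (graph_union R D) b d
         in \<forall>s::nat. lap_coeff Ga s \<ge> lap_coeff Gb s"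
proof -
  note A = forest_poly_path_with_end[OF assms(11)] and B = forest_poly_path_with_end[OF assms(12)]
  define g where "g = (\<lambda>z. if z = x then a else if z = y then b else z)"
  define R where "R = graph_union (graph_union (map_graph g H) A) B"
  have ab: "a \<notin> verts H" "b \<notin> verts H" "a \<noteq> b" using A(2) B(2) assms(5,7,9) by blast+
  note H' = relabel_two_vertices[OF assms(4,15-17) ab, folded g_def]
  have R_eq: "identify (identify (graph_union (graph_union A B) H) a x) b y = R"
    unfolding R_def g_def by (rule identify_two_pendant_graphs) (use A B assms in auto)
  have "forest_poly H {y} = forest_poly H {x}"
    using forest_poly_automorphism[OF assms(4,18), of "{x}"] assms(15,19) by simp
  then have diff: "nonneg_coeffs (forest_poly R {a} - forest_poly R {b})"
    unfolding R_def using H' A(2) B(2) assms(5,7,9,15,16,21)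
    by (intro nonneg_coeffs_pendant_paths_diff assms(11,12)) auto
  have R: "wf_graph R" "verts R \<inter> verts D = {}" "a \<in> verts R" "b \<in> verts R"
    unfolding R_def using H'(1,2) A(1,2) B(1,2) assms(6,8,10)
    by (auto intro!: wf_graph_union)
  have "lap_coeff (identify (graph_union R D) b d) s \<le> lap_coeff (identify (graph_union R D) a d) s" for s
    using R(1) assms(3) R(2-4) assms(13) diff by (rule lap_coeff_attach_mono)
  then show ?thesis unfolding Let_def R_eq by blast
qed

end
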